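(* Let $\mathbb{X}$ be an idempotent semifield as described in the context. Let $n,m\geq1$, let $\bm{p}_{1},\ldots,\bm{p}_{m}\in\mathbb{X}^{n}$ be regular vectors, let $w_{1},\ldots,w_{m}$ be positive real numbers, let $h_{1},\ldots,h_{m},d_{1},\ldots,d_{m}\in\mathbb{X}\setminus\{\mathbb{0}\}$, let $\bm{B}=(b_{ik})\in\mathbb{X}^{n\times n}$ (entries may equal $\mathbb{0}$), and let $\bm{f},\bm{g}\in\mathbb{X}^{n}$ be regular vectors with $\bm{f}\leq\bm{g}$. Consider the problem of minimizing, over regular vectors $\bm{x}\in\mathbb{X}^{n}$, $$\bigoplus_{1\leq j\leq m}h_{j}(\bm{p}_{j}^{-}\bm{x}\oplus\bm{x}^{-}\bm{p}_{j})^{w_{j}}$$ subject to $$\bm{p}_{j}^{-}\bm{x}\oplus\bm{x}^{-}\bm{p}_{j}\leq d_{j}\ (j=1,\ldots,m),\qquad \bm{B}\bm{x}\leq\bm{x},\qquad \bm{f}\leq\bm{x}\leq\bm{g}.$$ Define the vectors $\bm{s},\bm{t}$ by $$\bm{s}=\bigoplus_{1\leq j\leq m}d_{j}^{-1}\bm{p}_{j}\oplus\bm{f},\qquad \bm{t}^{-}=\bigoplus_{1\leq j\leq m}d_{j}^{-1}\bm{p}_{j}^{-}\oplus\bm{g}^{-}.$$ Suppose that (1) $\mathrm{Tr}(\bm{B})\leq\mathbb{1}$ and (2) $\bm{t}^{-}\bm{B}^{\ast}\bm{s}\leq\mathbb{1}$. Then the minimum value of the problem is $$\theta=\bigoplus_{1\leq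 j,l\leq m}\left(h_{j}^{\frac{w_{l}}{w_{j}+w_{l}}}h_{l}^{\frac{w_{j}}{w_{j}+w_{l}}}(\bm{p}_{j}^{-}\bm{B}^{\ast}\bm{p}_{l})^{\frac{w_{j}w_{l}}{w_{j}+w_{l}}}\oplus h_{j}(\bm{p}_{j}^{-}\bm{B}^{\ast}\bm{s})^{w_{j}}\oplus h_{l}(\bm{t}^{-}\bm{B}^{\ast}\bm{p}_{l})^{w_{l}}\right),$$ and, with $$\bm{q}=\bigoplus_{1\leq j\leq m}\theta^{-1/w_{j}}h_{j}^{1/w_{j}}\bm{p}_{j},\qquad \bm{r}^{-}=\bigoplus_{1\leq j\leq m}\theta^{-1/w_{j}}h_{j}^{1/w_{j}}\bm{p}_{j}^{-},$$ all solutions of the problem are given in parametric form by $\bm{x}=\bm{B}^{\ast}\bm{u}$, where the parameter vector $\bm{u}$ satisfies $\bm{q}\oplus\bm{s}\leq\bm{u}\leq((\bm{r}^{-}\oplus\bm{t}^{-})\bm{B}^{\ast})^{-}$.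
   Context: An idempotent semifield $(\mathbb{X},\oplus,\otimes,\mathbb{0},\mathbb{1})$ is a set with distinct elements $\mathbb{0},\mathbb{1}$ such that $(\mathbb{X},\oplus,\mathbb{0})$ is a commutative idempotent monoid ($x\oplus x=x$), $(\mathbb{X}\setminus\{\mathbb{0}\},\otimes,\mathbb{1})$ is an abelian group, and $\otimes$ distributes over $\oplus$. The relation $x\leq y\iff x\oplus y=y$ is assumed to be a total order. The sign $\otimes$ is omitted; $x^{-1}$ denotes the multiplicative inverse of $x\neq\mathbb{0}$. It is assumed that powers $x^{p}$ with real exponents $p$ are well defined (with $\mathbb{0}^{p}=\mathbb{0}$ for $p>0$) and obey the usual power rules. Main example: the max-plus semifield $(\mathbb{R}\cup\{-\infty\},\max,+,-\infty,0)$, where $x^{p}=px$ and $x^{-1}=-x$. Vector and matrix operations are the usual ones with $\oplus,\otimes$ in place of $+,\times$; inequalities between vectors are componentwise. A vector is regular if none of its entries equals $\mathbb{0}$. For a nonzero column vector $\bm{x}=(x_{i})$, $\bm{x}^{-}$ is the row vector with entries $x_{i}^{-1}$ if $x_{i}\neq\mathbb{0}$ and $\mathbb{0}$ otherwise (and similarly a nonzero row vector is transformed into a column vector). $\bm{I}$ is the identity matrix (diagonal $\mathbb{1}$, off-diagonal $\mathbb{0}$), $\bm{B}^{0}=\bm{I}$, $\bm{B}^{p}=\bm{B}\bm{B}^{p-1}$. For an $n\times n$ matrix $\bm{B}$: $\mathrm{tr}\,\bm{B}=b_{11}\oplus\cdots\oplus b_{nn}$, $\mathrm{Tr}(\bm{B})=\mathrm{tr}\,\bm{B}\oplus\cdots\oplus\mathrm{tr}\,\bm{B}^{n}$,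 and (when $\mathrm{Tr}(\bm{B})\leq\mathbb{1}$) $\bm{B}^{\ast}=\bm{I}\oplus\bm{B}\oplus\cdots\oplus\bm{B}^{n-1}$. *)

theory Defs
  imports "HOL-Analysis.Finite_Cartesian_Product"
begin

text \<open>Idempotent semifield with a total order given by x \<le> y iff x + y = y,
  where + plays the role of the idempotent addition and * the multiplication.
  pw x p is the real power x^p.\<close>

class idem_semifield = comm_semiring_1 + linorder + inverse +
  fixes pw :: "'a \<Rightarrow> real \<Rightarrow> 'a"
  assumes add_idem: "x + x = x"
    and le_iff_add: "x \<le> y \<longleftrightarrow> x + y = y"
    and mult_nonzero: "x \<noteq> 0 \<Longrightarrow> y \<noteq> 0 \<Longrightarrow> x * y \<noteq> 0"
    and right_inverse_nz: "x \<noteq> 0 \<Longrightarrow> x * inverse x = 1"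
    and pw_nonzero: "x \<noteq> 0 \<Longrightarrow> pw x p \<noteq> 0"
    and pw_one: "pw x 1 = x"
    and pw_add: "x \<noteq> 0 \<Longrightarrow> pw x (p + q) = pw x p * pw x q"
    and pw_pw: "x \<noteq> 0 \<Longrightarrow> pw (pw x p) q = pw x (p * q)"
    and pw_mult_base: "x \<noteq> 0 \<Longrightarrow> y \<noteq> 0 \<Longrightarrow> pw (x * y) p = pw x p * pw y p"
    and pw_zero_base: "p > 0 \<Longrightarrow> pw 0 p = 0"
    and pw_mono: "p > 0 \<Longrightarrow> x \<le> y \<Longrightarrow> pw x p \<le> pw y p"

text \<open>The conjugate x^- (entrywise inverse of nonzero entries, 0 otherwise);
  row and column vectors are both represented as elements of 'a^'n.\<close>
definition conj_vec :: "'a::idem_semifield ^ 'n \<Rightarrow> 'a ^ 'n" where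
  "conj_vec x = (\<chi> i. if x $ i = 0 then 0 else inverse (x $ i))"

definition regular :: "'a::idem_semifield ^ 'n \<Rightarrow> bool" where
  "regular x \<longleftrightarrow> (\<forall>i. x $ i \<noteq> 0)"

definition rc :: "'a::idem_semifield ^ 'n \<Rightarrow> 'a ^ 'n \<Rightarrow> 'a" where
  "rc r c = (\<Sum>i\<in>UNIV. r $ i * c $ i)"

primrec mpow :: "'a::idem_semifield ^ 'n ^ 'n \<Rightarrow> nat \<Rightarrow> 'a ^ 'n ^ 'n" where
  "mpow B 0 = mat 1"
| "mpow B (Suc k) = B ** mpow B k"

definition mtr :: "'a::idem_semifield ^ 'n ^ 'n \<Rightarrow> 'a" where
  "mtr B = (\<Sum>i\<in>UNIV. B $ i $ i)"

definition Tr :: "'a::idem_semifield ^ 'n ^ 'n \<Rightarrow> 'a" where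
  "Tr B = (\<Sum>k\<in>{1..CARD('n)}. mtr (mpow B k))"

definition kstar :: "'a::idem_semifield ^ 'n ^ 'n \<Rightarrow> 'a ^ 'n ^ 'n" where
  "kstar B = (\<Sum>k\<in>{0..<CARD('n)}. mpow B k)"

end

theory Submission
  imports Defs
begin

text \<open>
  Each constraint, and likewise the inequality \<open>F x \<le> \<theta>\<close>, has the form
  \<open>c (p\<^sup>- x \<oplus> x\<^sup>- p) \<le> \<one>\<close>, which splits into the two linear conditions
  \<open>c p \<le> x\<close> and \<open>c p\<^sup>- x \<le> \<one>\<close>.  So the feasible set is
  \<open>{x. B x \<le> x, s \<le> x, t\<^sup>- x \<le> \<one>}\<close> and its part where \<open>F x \<le> \<theta>\<close> is
  \<open>{x. B x \<le> x, q \<oplus> s \<le> x, (r\<^sup>- \<oplus> t\<^sup>-) x \<le> \<one>}\<close>.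
  If \<open>Tr B \<le> \<one>\<close>, every cycle of the digraph of \<open>B\<close> has weight at most \<open>\<one>\<close>, hence
  \<open>B B\<^sup>* \<le> B\<^sup>*\<close>, and the solutions of \<open>B x \<le> x\<close>, \<open>a \<le> x\<close>, \<open>r\<^sup>- x \<le> \<one>\<close>
  are exactly the vectors \<open>B\<^sup>* u\<close> with \<open>a \<le> u \<le> (r\<^sup>- B\<^sup>*)\<^sup>-\<close>.

  A feasible \<open>x\<close> satisfies \<open>B\<^sup>* x = x\<close>, whence \<open>p\<^sub>j\<^sup>- B\<^sup>* p\<^sub>l \<le> (p\<^sub>j\<^sup>- x)(x\<^sup>- p\<^sub>l)\<close>,
  \<open>p\<^sub>j\<^sup>- B\<^sup>* s \<le> p\<^sub>j\<^sup>- x\<close> and \<open>t\<^sup>- B\<^sup>* p\<^sub>l \<le> x\<^sup>- p\<^sub>l\<close>; together with the weighted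
  geometric mean of the \<open>j\<close>-th and \<open>l\<close>-th terms of \<open>F x\<close> this bounds every term of
  \<open>\<theta>\<close> by \<open>F x\<close>.  Conversely, the terms of \<open>\<theta>\<close> are precisely what is needed for
  \<open>u = q \<oplus> s\<close> to satisfy \<open>(r\<^sup>- \<oplus> t\<^sup>-) B\<^sup>* u \<le> \<one>\<close>, so the bound is attained.
\<close>

section \<open>Idempotent semifields\<close>

context idem_semifield
begin

lemma add_eq_max: "x + y = max x y"
proof (cases "x \<le> y")
  case True
  then show ?thesis using le_iff_add[of x y] by (simp add: max_def)
next
  case False
  then have "y + x = x" using le_iff_add[of y x] by auto
  then show ?thesis using False by (simp add: max_def add.commute)
qed

subclass ordered_comm_semiring
proof
  fix a b c :: 'a
  assume "a \<le> b"
  then show "c + a \<le> c + b" by (simp add: add_eq_max max.coboundedI2)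
  from \<open>a \<le> b\<close> have "c * a + c * b = c * b" by (simp add: le_iff_add flip: distrib_left)
  then show "c * a \<le> c * b" by (simp only: le_iff_add)
qed

subclass canonically_ordered_monoid_add
  by standard (auto simp: add_eq_max max_def)

subclass semiring_no_zero_divisors
  by standard (rule mult_nonzero)

lemma add_le_iff [simp]: "x + y \<le> z \<longleftrightarrow> x \<le> z \<and> y \<le> z"
  by (simp add: add_eq_max)

lemma add_ge1: "x \<le> x + y"
  by (simp add: add_eq_max)

lemma add_ge2: "y \<le> x + y"
  by (simp add: add_eq_max)

lemma sum_le_iff: "finite A \<Longrightarrow> sum f A \<le> z \<longleftrightarrow> (\<forall>i\<in>A. f i \<le> z)"
  by (induction A rule: finite_induct) auto

lemma ex_term_eq_sum: "finite A \<Longrightarrow> A \<noteq> {} \<Longrightarrow> \<exists>i\<in>A. sum f A = f i"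
proof (induction A rule: finite_induct)
  case (insert x A)
  show ?case
  proof (cases "A = {}")
    case False
    then obtain i where "i \<in> A" "sum f A = f i" using insert by auto
    then show ?thesis using insert by (auto simp: add_eq_max max_def)
  qed simp
qed simp

lemma inverse_nonzero:
  assumes "x \<noteq> 0"
  shows "inverse x \<noteq> 0"
proof
  assume "inverse x = 0"
  then show False using right_inverse_nz[OF assms] by simp
qed

lemma left_inverse_nz: "x \<noteq> 0 \<Longrightarrow> inverse x * x = 1"
  using right_inverse_nz by (simp add: mult.commute)

lemma inverse_eqI:
  assumes "a * b = 1"
  shows "inverse a = b"
proof -
  have "a \<noteq> 0" using assms by auto
  then have "b = inverse a * a * b" by (simp add: left_inverse_nz)
  also have "\<dots> = inverse a" using assms by (simp add: mult.assoc)
  finally show ?thesis by simp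
qed

lemma inverse_inverse_nz: "x \<noteq> 0 \<Longrightarrow> inverse (inverse x) = x"
  by (rule inverse_eqI) (rule left_inverse_nz)

lemma mult_le_iff_le_mult_inverse:
  assumes "x \<noteq> 0"
  shows "a * x \<le> b \<longleftrightarrow> a \<le> b * inverse x"
proof
  assume "a * x \<le> b"
  then have "a * x * inverse x \<le> b * inverse x" by (simp add: mult_right_mono)
  then show "a \<le> b * inverse x" using assms by (simp add: mult.assoc right_inverse_nz)
next
  assume "a \<le> b * inverse x"
  then have "a * x \<le> b * inverse x * x" by (simp add: mult_right_mono)
  then show "a * x \<le> b" using assms by (simp add: mult.assoc left_inverse_nz)
qed

lemma inverse_mult_le_one_iff: "t \<noteq> 0 \<Longrightarrow> inverse t * x \<le> 1 \<longleftrightarrow> x \<le> t"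
  using mult_le_iff_le_mult_inverse[of "inverse t" x 1]
  by (simp add: inverse_nonzero inverse_inverse_nz mult.commute)

lemma idempotent_nonzero_eq_one:
  assumes "y \<noteq> 0" and "y = y * y"
  shows "y = 1"
proof -
  have "inverse y * y = inverse y * y * y" using assms(2) by (simp add: mult.assoc)
  then show ?thesis using assms(1) by (simp add: left_inverse_nz)
qed

lemma pw_zero: "x \<noteq> 0 \<Longrightarrow> pw x 0 = 1"
  using pw_add[of x 0 0] by (intro idempotent_nonzero_eq_one pw_nonzero) simp_all

lemma one_pw: "pw 1 p = 1"
  using pw_mult_base[of 1 1 p] by (intro idempotent_nonzero_eq_one pw_nonzero) simp_all

lemma pw_minus: "x \<noteq> 0 \<Longrightarrow> pw x (- p) = inverse (pw x p)"
  using pw_add[of x p "- p"] by (intro inverse_eqI[symmetric]) (simp add: pw_zero)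

lemma pw_minus_one: "x \<noteq> 0 \<Longrightarrow> pw x (-1) = inverse x"
  using pw_minus[of x 1] by (simp add: pw_one)

lemma pw_le_cancel:
  assumes "g > 0" and "pw a g \<le> pw b g"
  shows "a \<le> b"
proof (cases "a = 0")
  case False
  have "b \<noteq> 0"
  proof
    assume "b = 0"
    then have "pw a g = 0" using assms pw_zero_base by simp
    then show False using False pw_nonzero by blast
  qed
  have "pw (pw a g) (1/g) \<le> pw (pw b g) (1/g)"
    using assms(1) pw_mono[OF _ assms(2), of "1/g"] by simp
  moreover have "pw (pw x g) (1/g) = x" if "x \<noteq> 0" for x
    using that assms(1) by (simp add: pw_pw pw_one)
  ultimately show ?thesis using False \<open>b \<noteq> 0\<close> by simp
next
  case True
  then show ?thesis by simp
qed

lemma pw_le_one_iff: "w > 0 \<Longrightarrow> pw y w \<le> 1 \<longleftrightarrow> y \<le> 1"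
  using pw_le_cancel[of w y 1] pw_mono[of w y 1] by (auto simp: one_pw)

lemma scaled_pw_le_iff:
  assumes "t \<noteq> 0" and "h \<noteq> 0" and "w > 0"
  shows "h * pw R w \<le> t \<longleftrightarrow> (pw t (-1/w) * pw h (1/w)) * R \<le> 1"
proof (cases "R = 0")
  case True
  then show ?thesis using assms by (simp add: pw_zero_base)
next
  case False
  let ?c = "pw t (-1/w) * pw h (1/w)"
  have "?c \<noteq> 0" using assms by (simp add: pw_nonzero)
  then have "pw (?c * R) w = pw (pw t (-1/w)) w * pw (pw h (1/w)) w * pw R w"
    using assms False by (simp add: pw_mult_base pw_nonzero)
  also have "\<dots> = inverse t * (h * pw R w)"
    using assms by (simp add: pw_pw pw_minus_one pw_one mult.assoc)
  finally have "pw (?c * R) w \<le> 1 \<longleftrightarrow> h * pw R w \<le> t"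
    using assms(1) by (simp add: inverse_mult_le_one_iff)
  then show ?thesis using assms(3) by (simp add: pw_le_one_iff)
qed

definition cross_term :: "'a \<Rightarrow> 'a \<Rightarrow> real \<Rightarrow> real \<Rightarrow> 'a \<Rightarrow> 'a" where
  "cross_term hj hl wj wl P =
     pw hj (wl / (wj + wl)) * pw hl (wj / (wj + wl)) * pw P (wj * wl / (wj + wl))"

lemma cross_term_le:
  assumes wj: "wj > 0" and wl: "wl > 0"
    and Xj: "hj * pw Rj wj \<le> F" and Xl: "hl * pw Rl wl \<le> F" and P: "P \<le> Rj * Rl"
  shows "cross_term hj hl wj wl P \<le> F"
proof (cases "hj = 0 \<or> hl = 0 \<or> Rj = 0 \<or> Rl = 0")
  case True
  then show ?thesis
    using wj wl P by (auto simp: cross_term_def pw_zero_base)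
next
  case False
  let ?al = "wl / (wj + wl)" and ?be = "wj / (wj + wl)" and ?ga = "wj * wl / (wj + wl)"
  have pos: "?al > 0" "?be > 0" "?ga > 0" using wj wl by auto
  have "F \<noteq> 0" using Xj False by (auto simp: pw_nonzero)
  have "cross_term hj hl wj wl P \<le> pw hj ?al * pw hl ?be * pw (Rj * Rl) ?ga"
    unfolding cross_term_def using pos P by (intro mult_left_mono pw_mono) simp_all
  also have "\<dots> = pw (hj * pw Rj wj) ?al * pw (hl * pw Rl wl) ?be"
    using False wj wl by (simp add: pw_mult_base pw_nonzero pw_pw ac_simps)
  also have "\<dots> \<le> pw F ?al * pw F ?be" using pos Xj Xl by (intro mult_mono pw_mono) simp_all
  also have "\<dots> = pw F (?al + ?be)" using \<open>F \<noteq> 0\<close> by (simp add: pw_add)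
  also have "?al + ?be = 1"
    using wj wl by (subst add_divide_distrib[symmetric]) (simp add: add.commute)
  finally show ?thesis by (simp add: pw_one)
qed

lemma pw_scaled_coeff:
  assumes "t \<noteq> 0" and "h \<noteq> 0" and "w > 0"
  shows "pw (pw t (-1/w) * pw h (1/w)) (w * v) = pw t (- v) * pw h v"
  using assms by (simp add: pw_mult_base pw_nonzero pw_pw)

lemma cross_term_le_imp_scaled_le_one:
  assumes t: "t \<noteq> 0" and hj: "hj \<noteq> 0" and hl: "hl \<noteq> 0" and wj: "wj > 0" and wl: "wl > 0"
    and le: "cross_term hj hl wj wl P \<le> t"
  shows "(pw t (-1/wj) * pw hj (1/wj)) * ((pw t (-1/wl) * pw hl (1/wl)) * P) \<le> 1"
proof (cases "P = 0")
  case False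
  let ?al = "wl / (wj + wl)" and ?be = "wj / (wj + wl)" and ?ga = "wj * wl / (wj + wl)"
  let ?cj = "pw t (-1/wj) * pw hj (1/wj)" and ?cl = "pw t (-1/wl) * pw hl (1/wl)"
  have ga: "?ga = wj * ?al" "?ga = wl * ?be" by simp_all
  have cj: "pw ?cj ?ga = pw t (- ?al) * pw hj ?al"
    by (subst ga(1)) (rule pw_scaled_coeff[OF t hj wj])
  have cl: "pw ?cl ?ga = pw t (- ?be) * pw hl ?be"
    by (subst ga(2)) (rule pw_scaled_coeff[OF t hl wl])
  have "pw (?cj * (?cl * P)) ?ga = pw ?cj ?ga * (pw ?cl ?ga * pw P ?ga)"
    using t hj hl False by (simp add: pw_mult_base pw_nonzero)
  also have "\<dots> = pw t (- ?al) * pw t (- ?be) * cross_term hj hl wj wl P"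
    unfolding cj cl cross_term_def by (simp add: ac_simps)
  also have "pw t (- ?al) * pw t (- ?be) = pw t (- (?al + ?be))"
    using t by (simp add: pw_add[symmetric])
  also have "?al + ?be = 1"
    using wj wl by (subst add_divide_distrib[symmetric]) (simp add: add.commute)
  finally have "pw (?cj * (?cl * P)) ?ga = inverse t * cross_term hj hl wj wl P"
    using t by (simp add: pw_minus_one)
  then have "pw (?cj * (?cl * P)) ?ga \<le> 1" using le t by (simp add: inverse_mult_le_one_iff)
  moreover have "?ga > 0" using wj wl by simp
  ultimately show ?thesis by (simp add: pw_le_one_iff)
qed simp

end

section \<open>Vectors and matrices\<close>

lemma vec_add_le_iff [simp]: "x + y \<le> (z :: 'a::idem_semifield ^ 'n) \<longleftrightarrow> x \<le> z \<and> y \<le> z"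
  by (auto simp: less_eq_vec_def)

lemma vec_add_ge2: "(y :: 'a::idem_semifield ^ 'n) \<le> x + y"
  by (simp add: less_eq_vec_def add_ge2)

lemma vec_sum_le_iff:
  "finite A \<Longrightarrow> sum f A \<le> (z :: 'a::idem_semifield ^ 'n) \<longleftrightarrow> (\<forall>j\<in>A. f j \<le> z)"
  by (auto simp: less_eq_vec_def sum_le_iff)

lemma rc_add_left: "rc (x + y) c = rc x c + rc y c"
  by (simp add: rc_def distrib_right sum.distrib)

lemma rc_add_right: "rc r (x + y) = rc r x + rc r y"
  by (simp add: rc_def distrib_left sum.distrib)

lemma rc_sum_left: "rc (sum f S) c = (\<Sum>j\<in>S. rc (f j) c)"
  unfolding rc_def by (simp add: sum_distrib_right) (rule sum.swap)

lemma rc_sum_right: "rc r (sum f S) = (\<Sum>j\<in>S. rc r (f j))"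
  unfolding rc_def by (simp add: sum_distrib_left) (rule sum.swap)

lemma rc_smult_left: "rc (a *s r) c = a * rc r c"
  by (simp add: rc_def sum_distrib_left mult.assoc)

lemma rc_smult_right: "rc r (a *s c) = a * rc r c"
  by (simp add: rc_def sum_distrib_left mult.left_commute)

lemma rc_mono_right: "c \<le> c' \<Longrightarrow> rc r c \<le> rc r c'"
  unfolding rc_def by (intro sum_mono mult_left_mono) (simp_all add: less_eq_vec_def)

lemma rc_le_iff: "rc r c \<le> z \<longleftrightarrow> (\<forall>i. r $ i * c $ i \<le> z)"
  by (simp add: rc_def sum_le_iff)

lemma rc_matrix_vector_mult: "rc r (A *v c) = rc (r v* A) c"
  unfolding rc_def matrix_vector_mult_def vector_matrix_mult_def
  by (simp add: sum_distrib_left sum_distrib_right mult.assoc mult.left_commute) (rule sum.swap)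

lemma matrix_vector_mult_mono: "x \<le> y \<Longrightarrow> (A :: 'a::idem_semifield ^ 'n ^ 'm) *v x \<le> A *v y"
  by (simp add: less_eq_vec_def matrix_vector_mult_def sum_mono mult_left_mono)

lemma matrix_vector_mult_mono_left: "(A :: 'a::idem_semifield ^ 'n ^ 'm) \<le> A' \<Longrightarrow> A *v x \<le> A' *v x"
  by (simp add: less_eq_vec_def matrix_vector_mult_def sum_mono mult_right_mono)

lemma vector_matrix_mult_mono_right: "(A :: 'a::idem_semifield ^ 'n ^ 'm) \<le> A' \<Longrightarrow> r v* A \<le> r v* A'"
  by (simp add: less_eq_vec_def vector_matrix_mult_def sum_mono mult_left_mono)

lemma matrix_vector_mult_smult: "A *v (c *s x) = c *s (A *v (x :: 'a::idem_semifield ^ 'n))"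
  by (simp add: vec_eq_iff matrix_vector_mult_def sum_distrib_left mult.left_commute)

lemma matrix_vector_mult_sum: "A *v sum f S = (\<Sum>j\<in>S. A *v (f j :: 'a::idem_semifield ^ 'n))"
  unfolding vec_eq_iff
proof
  fix i
  show "(A *v sum f S) $ i = (\<Sum>j\<in>S. A *v f j) $ i"
    by (simp add: matrix_vector_mult_def sum_distrib_left) (rule sum.swap)
qed

lemma sum_matrix_vector_mult: "sum F S *v (x :: 'a::idem_semifield ^ 'n) = (\<Sum>k\<in>S. F k *v x)"
  unfolding vec_eq_iff
proof
  fix i
  show "(sum F S *v x) $ i = (\<Sum>k\<in>S. F k *v x) $ i"
    by (simp add: matrix_vector_mult_def sum_distrib_right) (rule sum.swap)
qed

lemma regular_mono: "regular x \<Longrightarrow> x \<le> y \<Longrightarrow> regular y"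
  unfolding regular_def less_eq_vec_def by (metis le_zero_eq)

lemma conj_vec_nth: "regular x \<Longrightarrow> conj_vec x $ i = inverse (x $ i)"
  by (simp add: regular_def conj_vec_def)

lemma regular_conj_vec: "regular x \<Longrightarrow> regular (conj_vec x)"
  by (simp add: regular_def conj_vec_nth inverse_nonzero)

lemma rc_nonzero:
  assumes "regular u" and "regular v"
  shows "rc u v \<noteq> 0"
proof
  fix i
  assume "rc u v = 0"
  then have "u $ i * v $ i = 0" by (simp add: rc_le_iff flip: le_zero_eq)
  then show False using assms by (simp add: regular_def)
qed

lemma smult_le_iff_rc_conj_vec:
  assumes "regular v"
  shows "c * rc (conj_vec v) y \<le> 1 \<longleftrightarrow> c *s y \<le> v"
proof -
  have "c * rc (conj_vec v) y = (\<Sum>i\<in>UNIV. inverse (v $ i) * (c * y $ i))"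
    using assms by (simp add: rc_def sum_distrib_left conj_vec_nth mult.left_commute)
  moreover have "inverse (v $ i) * (c * y $ i) \<le> 1 \<longleftrightarrow> c * y $ i \<le> v $ i" for i
    using assms by (simp add: regular_def inverse_mult_le_one_iff)
  ultimately show ?thesis by (simp add: sum_le_iff less_eq_vec_def)
qed

lemma rc_conj_vec_le_one_iff: "regular v \<Longrightarrow> rc (conj_vec v) y \<le> 1 \<longleftrightarrow> y \<le> v"
  using smult_le_iff_rc_conj_vec[of v 1 y] by simp

lemma rc_le_one_iff_le_conj_vec:
  assumes "regular v"
  shows "rc v u \<le> 1 \<longleftrightarrow> u \<le> conj_vec v"
proof -
  have "v $ i * u $ i \<le> 1 \<longleftrightarrow> u $ i \<le> inverse (v $ i)" for i
    using assms mult_le_iff_le_mult_inverse[of "v $ i" "u $ i" 1]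
    by (simp add: regular_def mult.commute)
  then show ?thesis using assms by (simp add: rc_le_iff less_eq_vec_def conj_vec_nth)
qed

lemma le_rc_conj_vec_smult:
  assumes "regular x"
  shows "y \<le> rc (conj_vec x) y *s x"
  unfolding less_eq_vec_def
proof
  fix i
  have "inverse (x $ i) * y $ i \<le> rc (conj_vec x) y"
    unfolding rc_def using assms
    by (simp add: conj_vec_nth member_le_sum[where f = "\<lambda>i. inverse (x $ i) * y $ i"])
  then have "inverse (x $ i) * y $ i * x $ i \<le> rc (conj_vec x) y * x $ i"
    by (rule mult_right_mono) simp
  then have "inverse (x $ i) * x $ i * y $ i \<le> rc (conj_vec x) y * x $ i"
    by (simp only: ac_simps)
  then show "y $ i \<le> (rc (conj_vec x) y *s x) $ i"
    using assms by (simp add: regular_def left_inverse_nz)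
qed

text \<open>In max-plus arithmetic \<open>p\<^sup>- x \<oplus> x\<^sup>- p\<close> is the Chebyshev distance
  \<open>max\<^sub>i |x\<^sub>i - p\<^sub>i|\<close>.\<close>

definition cheb_dist :: "'a::idem_semifield ^ 'n \<Rightarrow> 'a ^ 'n \<Rightarrow> 'a" where
  "cheb_dist p x = rc (conj_vec p) x + rc (conj_vec x) p"

lemma scaled_cheb_dist_le_one_iff:
  fixes p :: "'m::finite \<Rightarrow> 'a::idem_semifield ^ 'n"
  assumes "regular x"
  shows "(\<forall>j. c j * cheb_dist (p j) x \<le> 1) \<longleftrightarrow>
         (\<Sum>j\<in>UNIV. c j *s p j) \<le> x \<and> rc (\<Sum>j\<in>UNIV. c j *s conj_vec (p j)) x \<le> 1"
  using smult_le_iff_rc_conj_vec[OF assms]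
  by (auto simp: cheb_dist_def distrib_left rc_sum_left rc_smult_left vec_sum_le_iff sum_le_iff)

section \<open>The Kleene star\<close>

lemma kstar_nth:
  "kstar B $ i $ k = (\<Sum>m\<in>{0..<CARD('n)}. mpow (B :: 'a::idem_semifield ^ 'n ^ 'n) m $ i $ k)"
  by (simp add: kstar_def)

lemma mpow_le_kstar: "m < CARD('n) \<Longrightarrow> mpow (B :: 'a::idem_semifield ^ 'n ^ 'n) m \<le> kstar B"
  unfolding less_eq_vec_def kstar_nth by (auto intro: member_le_sum)

lemma le_kstar_mult_vec: "x \<le> kstar (B :: 'a::idem_semifield ^ 'n ^ 'n) *v x"
  using matrix_vector_mult_mono_left[OF mpow_le_kstar[of 0 B]] by simp

lemma mpow_mult_vec_le: "B *v x \<le> x \<Longrightarrow> mpow (B :: 'a::idem_semifield ^ 'n ^ 'n) m *v x \<le> x"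
proof (induction m)
  case (Suc m)
  have "mpow B (Suc m) *v x = B *v (mpow B m *v x)" by (simp add: matrix_vector_mul_assoc)
  also have "\<dots> \<le> B *v x" using Suc by (simp add: matrix_vector_mult_mono)
  finally show ?case using Suc.prems by (rule order_trans)
qed simp

lemma kstar_mult_vec_eq: "B *v x \<le> x \<Longrightarrow> kstar (B :: 'a::idem_semifield ^ 'n ^ 'n) *v x = x"
  using le_kstar_mult_vec[of x B]
  by (simp add: kstar_def sum_matrix_vector_mult vec_sum_le_iff mpow_mult_vec_le order.antisym)

lemma walk_prod_le_mpow:
  "(\<Prod>t<m. B $ v t $ v (Suc t)) \<le> mpow (B :: 'a::idem_semifield ^ 'n ^ 'n) m $ v 0 $ v m"
proof (induction m arbitrary: v)
  case 0
  then show ?case by (simp add: mat_def)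
next
  case (Suc m)
  have "(\<Prod>t<Suc m. B $ v t $ v (Suc t)) = B $ v 0 $ v 1 * (\<Prod>t<m. B $ v (Suc t) $ v (Suc (Suc t)))"
    unfolding prod.lessThan_Suc_shift by simp
  also have "\<dots> \<le> B $ v 0 $ v 1 * mpow B m $ v 1 $ v (Suc m)"
    using Suc.IH[of "\<lambda>t. v (Suc t)"] by (simp add: mult_left_mono)
  also have "\<dots> \<le> mpow B (Suc m) $ v 0 $ v (Suc m)"
    by (simp add: matrix_matrix_mult_def
        member_le_sum[where f = "\<lambda>l. B $ v 0 $ l * mpow B m $ l $ v (Suc m)"])
  finally show ?case .
qed

text \<open>Since \<open>\<oplus>\<close> is \<open>max\<close>, a nonzero entry of \<open>B\<^sup>m\<close> is the weight of a single walk.\<close>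

lemma mpow_nth_eq_walk_prod:
  "mpow (B :: 'a::idem_semifield ^ 'n ^ 'n) m $ i $ k \<noteq> 0 \<Longrightarrow>
   \<exists>v. v 0 = i \<and> v m = k \<and> mpow B m $ i $ k = (\<Prod>t<m. B $ v t $ v (Suc t))"
proof (induction m arbitrary: i)
  case 0
  then show ?case by (intro exI[of _ "\<lambda>_. i"]) (simp add: mat_def split: if_splits)
next
  case (Suc m)
  obtain l where l: "mpow B (Suc m) $ i $ k = B $ i $ l * mpow B m $ l $ k"
    using ex_term_eq_sum[of UNIV "\<lambda>l. B $ i $ l * mpow B m $ l $ k"]
    by (auto simp: matrix_matrix_mult_def)
  then obtain v where v: "v 0 = l" "v m = k" "mpow B m $ l $ k = (\<Prod>t<m. B $ v t $ v (Suc t))"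
    using Suc by fastforce
  define u where "u t = (case t of 0 \<Rightarrow> i | Suc t \<Rightarrow> v t)" for t
  have "(\<Prod>t<Suc m. B $ u t $ u (Suc t)) = B $ i $ l * (\<Prod>t<m. B $ v t $ v (Suc t))"
    unfolding prod.lessThan_Suc_shift using v by (simp add: u_def)
  then show ?case using l v by (intro exI[of _ u]) (simp add: u_def)
qed

lemma walk_revisits:
  fixes v :: "nat \<Rightarrow> 'n::finite"
  obtains a b where "a < b" "b \<le> CARD('n)" "v a = v b"
proof -
  have "\<not> inj_on v {0..CARD('n)}"
  proof
    assume "inj_on v {0..CARD('n)}"
    then have "card (v ` {0..CARD('n)}) = Suc CARD('n)" by (simp add: card_image)
    moreover have "card (v ` {0..CARD('n)}) \<le> CARD('n)" by (rule card_mono) auto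
    ultimately show False by simp
  qed
  then obtain a b where "a \<le> CARD('n)" "b \<le> CARD('n)" "a \<noteq> b" "v a = v b"
    unfolding inj_on_def by auto
  then show ?thesis using that by (metis linorder_neqE_nat)
qed

lemma walk_shortcut:
  fixes e :: "'v \<Rightarrow> 'v \<Rightarrow> 'b::comm_monoid_mult"
  assumes "a < b" and "b \<le> m" and "v a = v b"
  obtains u where "u 0 = v 0" and "u (m - (b - a)) = v m"
    and "(\<Prod>t<m. e (v t) (v (Suc t)))
         = (\<Prod>t<m - (b - a). e (u t) (u (Suc t))) * (\<Prod>t<b - a. e (v (a + t)) (v (a + Suc t)))"
proof -
  define c where "c = b - a"
  define u where "u t = (if t \<le> a then v t else v (t + c))" for t
  let ?E = "\<lambda>v t. e (v t) (v (Suc t))"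
  have u_shift: "u t = v (t + c)" if "a \<le> t" for t
    using that assms by (cases "t = a") (auto simp: u_def c_def)
  have "(\<Prod>t<m. ?E v t) = prod (?E v) {0..<a} * prod (?E v) {a..<b} * prod (?E v) {b..<m}"
    using assms by (simp add: lessThan_atLeast0 prod.atLeastLessThan_concat)
  also have "prod (?E v) {0..<a} = prod (?E u) {0..<a}"
    by (intro prod.cong) (auto simp: u_def)
  also have "prod (?E v) {a..<b} = (\<Prod>t<c. e (v (a + t)) (v (a + Suc t)))"
    using prod.shift_bounds_nat_ivl[of "?E v" 0 a c] assms
    by (simp add: c_def lessThan_atLeast0 add.commute)
  also have "prod (?E v) {b..<m} = prod (?E u) {a..<m - c}"
    using prod.shift_bounds_nat_ivl[of "?E v" a c "m - c"] assms
    by (simp add: c_def u_shift)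
  also have "prod (?E u) {0..<a} * (\<Prod>t<c. e (v (a + t)) (v (a + Suc t))) * prod (?E u) {a..<m - c}
      = (prod (?E u) {0..<a} * prod (?E u) {a..<m - c}) * (\<Prod>t<c. e (v (a + t)) (v (a + Suc t)))"
    by (simp only: ac_simps)
  also have "prod (?E u) {0..<a} * prod (?E u) {a..<m - c} = (\<Prod>t<m - c. ?E u t)"
    using assms by (simp add: c_def lessThan_atLeast0 prod.atLeastLessThan_concat)
  finally have "(\<Prod>t<m. ?E v t) = (\<Prod>t<m - c. ?E u t) * (\<Prod>t<c. e (v (a + t)) (v (a + Suc t)))" .
  moreover have "u 0 = v 0" by (simp add: u_def)
  moreover have "u (m - c) = v m" using assms u_shift[of "m - c"] by (simp add: c_def)
  ultimately show thesis using that[of u] unfolding c_def by blast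
qed

lemma cycle_prod_le_one:
  fixes B :: "'a::idem_semifield ^ 'n ^ 'n"
  assumes "Tr B \<le> 1" and "0 < c" and "c \<le> CARD('n)" and "v c = v 0"
  shows "(\<Prod>t<c. B $ v t $ v (Suc t)) \<le> 1"
proof -
  have "(\<Prod>t<c. B $ v t $ v (Suc t)) \<le> mpow B c $ v 0 $ v 0"
    using walk_prod_le_mpow[where B = B and m = c and v = v] assms(4) by simp
  also have "\<dots> \<le> mtr (mpow B c)"
    unfolding mtr_def by (rule member_le_sum) simp_all
  also have "\<dots> \<le> Tr B"
    unfolding Tr_def using assms(2,3) by (intro member_le_sum) auto
  finally show ?thesis using assms(1) by (rule order_trans)
qed

text \<open>A walk of length at least \<open>n\<close> revisits a vertex; cutting out the cycle does not
  decrease its weight, because cycle weights are bounded by \<open>Tr B \<le> \<one>\<close>.\<close>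

lemma walk_prod_le_kstar:
  fixes B :: "'a::idem_semifield ^ 'n ^ 'n"
  assumes "Tr B \<le> 1"
  shows "(\<Prod>t<m. B $ v t $ v (Suc t)) \<le> kstar B $ v 0 $ v m"
proof (induction m arbitrary: v rule: less_induct)
  case (less m)
  show ?case
  proof (cases "m < CARD('n)")
    case True
    then show ?thesis
      using walk_prod_le_mpow[where B = B and m = m and v = v] mpow_le_kstar[of m B]
      by (auto simp: less_eq_vec_def intro: order_trans)
  next
    case False
    obtain a b where ab: "a < b" "b \<le> CARD('n)" "v a = v b"
      by (rule walk_revisits)
    have "b \<le> m" using ab False by simp
    obtain u where u: "u 0 = v 0" "u (m - (b - a)) = v m"
      and split: "(\<Prod>t<m. B $ v t $ v (Suc t))
        = (\<Prod>t<m - (b - a). B $ u t $ u (Suc t)) * (\<Prod>t<b - a. B $ v (a + t) $ v (a + Suc t))"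
      by (rule walk_shortcut[where e = "\<lambda>i k. B $ i $ k", OF ab(1) \<open>b \<le> m\<close> ab(3)])
    have "(\<Prod>t<b - a. B $ v (a + t) $ v (a + Suc t)) \<le> 1"
      using cycle_prod_le_one[OF assms, of "b - a" "\<lambda>t. v (a + t)"] ab by simp
    then have "(\<Prod>t<m. B $ v t $ v (Suc t)) \<le> (\<Prod>t<m - (b - a). B $ u t $ u (Suc t)) * 1"
      unfolding split by (rule mult_left_mono) simp
    also have "\<dots> = (\<Prod>t<m - (b - a). B $ u t $ u (Suc t))" by simp
    also have "\<dots> \<le> kstar B $ u 0 $ u (m - (b - a))"
      using ab False by (intro less.IH) auto
    finally show ?thesis unfolding u .
  qed
qed

lemma mpow_le_kstar_if_Tr_le_one:
  fixes B :: "'a::idem_semifield ^ 'n ^ 'n"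
  assumes "Tr B \<le> 1"
  shows "mpow B m \<le> kstar B"
  unfolding less_eq_vec_def
proof (intro allI)
  fix i k
  show "mpow B m $ i $ k \<le> kstar B $ i $ k"
  proof (cases "mpow B m $ i $ k = 0")
    case False
    then obtain v where "v 0 = i" "v m = k" "mpow B m $ i $ k = (\<Prod>t<m. B $ v t $ v (Suc t))"
      using mpow_nth_eq_walk_prod by blast
    then show ?thesis using walk_prod_le_kstar[OF assms, where m = m and v = v] by simp
  qed simp
qed

lemma mult_kstar_le_kstar:
  fixes B :: "'a::idem_semifield ^ 'n ^ 'n"
  assumes "Tr B \<le> 1"
  shows "B ** kstar B \<le> kstar B"
  unfolding less_eq_vec_def
proof (intro allI)
  fix i k
  have "(B ** kstar B) $ i $ k = (\<Sum>m\<in>{0..<CARD('n)}. mpow B (Suc m) $ i $ k)"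
    by (simp add: matrix_matrix_mult_def kstar_nth sum_distrib_left) (rule sum.swap)
  also have "\<dots> \<le> kstar B $ i $ k"
    using mpow_le_kstar_if_Tr_le_one[OF assms] by (simp add: sum_le_iff less_eq_vec_def del: mpow.simps)
  finally show "(B ** kstar B) $ i $ k \<le> kstar B $ i $ k" .
qed

lemma le_conj_vec_kstar_iff:
  fixes B :: "'a::idem_semifield ^ 'n ^ 'n"
  assumes "regular r"
  shows "u \<le> conj_vec (r v* kstar B) \<longleftrightarrow> rc r (kstar B *v u) \<le> 1"
proof -
  have "r \<le> r v* kstar B"
    using vector_matrix_mult_mono_right[OF mpow_le_kstar[of 0 B], of r] by simp
  then have "regular (r v* kstar B)" using assms by (rule regular_mono [rotated])
  then show ?thesis by (simp add: rc_le_one_iff_le_conj_vec rc_matrix_vector_mult)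
qed

lemma kstar_solutions:
  fixes B :: "'a::idem_semifield ^ 'n ^ 'n"
  assumes "Tr B \<le> 1" and "regular r"
  shows "{x. B *v x \<le> x \<and> a \<le> x \<and> rc r x \<le> 1}
       = {kstar B *v u | u. a \<le> u \<and> u \<le> conj_vec (r v* kstar B)}"
proof -
  note le_conj = le_conj_vec_kstar_iff[OF assms(2)]
  have closed: "B *v (kstar B *v u) \<le> kstar B *v u" for u
  proof -
    have "B *v (kstar B *v u) = (B ** kstar B) *v u" by (rule matrix_vector_mul_assoc)
    also have "\<dots> \<le> kstar B *v u"
      by (rule matrix_vector_mult_mono_left[OF mult_kstar_le_kstar[OF assms(1)]])
    finally show ?thesis .
  qed
  show ?thesis
  proof (intro set_eqI iffI)
    fix x
    assume "x \<in> {x. B *v x \<le> x \<and> a \<le> x \<and> rc r x \<le> 1}"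
    then have "B *v x \<le> x" and "a \<le> x" and "rc r x \<le> 1" by simp_all
    then have "x = kstar B *v x" and "x \<le> conj_vec (r v* kstar B)"
      using le_conj[of x] kstar_mult_vec_eq[of B x] by simp_all
    then show "x \<in> {kstar B *v u | u. a \<le> u \<and> u \<le> conj_vec (r v* kstar B)}"
      using \<open>a \<le> x\<close> by blast
  next
    fix x
    assume "x \<in> {kstar B *v u | u. a \<le> u \<and> u \<le> conj_vec (r v* kstar B)}"
    then obtain u where x: "x = kstar B *v u" and "a \<le> u" and "u \<le> conj_vec (r v* kstar B)"
      by blast
    moreover have "a \<le> x" unfolding x by (rule order_trans[OF \<open>a \<le> u\<close> le_kstar_mult_vec])
    ultimately show "x \<in> {x. B *v x \<le> x \<and> a \<le> x \<and> rc r x \<le> 1}"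
      using closed[of u] le_conj[of u] by simp
  qed
qed

section \<open>The optimization problem\<close>

definition objective ::
  "('m::finite \<Rightarrow> 'a::idem_semifield ^ 'n) \<Rightarrow> ('m \<Rightarrow> real) \<Rightarrow> ('m \<Rightarrow> 'a) \<Rightarrow> 'a ^ 'n \<Rightarrow> 'a" where
  "objective p w h x = (\<Sum>j\<in>UNIV. h j * pw (cheb_dist (p j) x) (w j))"

definition opt_value ::
  "('m::finite \<Rightarrow> 'a::idem_semifield ^ 'n) \<Rightarrow> ('m \<Rightarrow> real) \<Rightarrow> ('m \<Rightarrow> 'a) \<Rightarrow> 'a ^ 'n ^ 'n
    \<Rightarrow> 'a ^ 'n \<Rightarrow> 'a ^ 'n \<Rightarrow> 'a" where
  "opt_value p w h S s t = (\<Sum>j\<in>UNIV. \<Sum>l\<in>UNIV.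
      cross_term (h j) (h l) (w j) (w l) (rc (conj_vec (p j)) (S *v p l))
      + h j * pw (rc (conj_vec (p j)) (S *v s)) (w j)
      + h l * pw (rc t (S *v p l)) (w l))"

lemma opt_value_le_iff:
  "opt_value p w h S s t \<le> z \<longleftrightarrow>
     (\<forall>j l. cross_term (h j) (h l) (w j) (w l) (rc (conj_vec (p j)) (S *v p l)) \<le> z)
     \<and> (\<forall>j. h j * pw (rc (conj_vec (p j)) (S *v s)) (w j) \<le> z)
     \<and> (\<forall>l. h l * pw (rc t (S *v p l)) (w l) \<le> z)"
  by (auto simp: opt_value_def sum_le_iff)

lemma opt_value_nonzero:
  assumes "\<And>j. h j \<noteq> 0" and "\<And>j. regular (p j)" and "regular (S *v s)"
  shows "opt_value p w h S s t \<noteq> 0"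
proof
  assume "opt_value p w h S s t = 0"
  then have "h j * pw (rc (conj_vec (p j)) (S *v s)) (w j) = 0" for j
    by (simp add: opt_value_le_iff flip: le_zero_eq)
  then show False
    using assms by (simp add: pw_nonzero rc_nonzero regular_conj_vec)
qed

lemma cheb_constraints_iff:
  fixes p :: "'m::finite \<Rightarrow> 'a::idem_semifield ^ 'n"
  assumes "\<And>j. d j \<noteq> 0" and "regular g" and "regular x"
  shows "(\<forall>j. cheb_dist (p j) x \<le> d j) \<and> f \<le> x \<and> x \<le> g \<longleftrightarrow>
         (\<Sum>j\<in>UNIV. inverse (d j) *s p j) + f \<le> x
         \<and> rc ((\<Sum>j\<in>UNIV. inverse (d j) *s conj_vec (p j)) + conj_vec g) x \<le> 1"
proof -
  have "(\<forall>j. cheb_dist (p j) x \<le> d j) \<longleftrightarrow> (\<forall>j. inverse (d j) * cheb_dist (p j) x \<le> 1)"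
    using assms(1) by (simp add: inverse_mult_le_one_iff)
  then show ?thesis
    using assms(2,3) by (auto simp: scaled_cheb_dist_le_one_iff rc_add_left rc_conj_vec_le_one_iff)
qed

lemma objective_le_iff:
  fixes p :: "'m::finite \<Rightarrow> 'a::idem_semifield ^ 'n"
  assumes "\<theta> \<noteq> 0" and "\<And>j. h j \<noteq> 0" and "\<And>j. w j > 0" and "regular x"
  shows "objective p w h x \<le> \<theta> \<longleftrightarrow>
         (\<Sum>j\<in>UNIV. (pw \<theta> (- 1 / w j) * pw (h j) (1 / w j)) *s p j) \<le> x
         \<and> rc (\<Sum>j\<in>UNIV. (pw \<theta> (- 1 / w j) * pw (h j) (1 / w j)) *s conj_vec (p j)) x \<le> 1"
  unfolding objective_def using assms
  by (simp add: sum_le_iff scaled_pw_le_iff scaled_cheb_dist_le_one_iff)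

lemma rc_mult_vec_le_of_mult_vec_le:
  assumes "regular x" and "S *v x \<le> x"
  shows "rc r (S *v y) \<le> rc (conj_vec x) y * rc r x"
proof -
  have "rc r (S *v y) \<le> rc r (S *v (rc (conj_vec x) y *s x))"
    by (intro rc_mono_right matrix_vector_mult_mono le_rc_conj_vec_smult assms(1))
  also have "\<dots> \<le> rc (conj_vec x) y * rc r x"
    using assms(2) by (simp add: matrix_vector_mult_smult rc_smult_right rc_mono_right mult_left_mono)
  finally show ?thesis .
qed

lemma opt_value_le_objective:
  assumes w: "\<And>j. w j > 0" and x: "regular x" and Sx: "S *v x \<le> x"
    and "s \<le> x" and "rc t x \<le> 1"
  shows "opt_value p w h S s t \<le> objective p w h x"
proof -
  let ?F = "objective p w h x"
  have F: "h j * pw (cheb_dist (p j) x) (w j) \<le> ?F" for j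
    unfolding objective_def
    by (rule member_le_sum[where f = "\<lambda>j. h j * pw (cheb_dist (p j) x) (w j)"]) simp_all
  have dist: "rc (conj_vec (p j)) x \<le> cheb_dist (p j) x" "rc (conj_vec x) (p j) \<le> cheb_dist (p j) x" for j
    by (simp_all add: cheb_dist_def add_ge1 add_ge2)
  have "rc (conj_vec (p j)) (S *v p l) \<le> cheb_dist (p j) x * cheb_dist (p l) x" for j l
  proof -
    have "rc (conj_vec (p j)) (S *v p l) \<le> rc (conj_vec x) (p l) * rc (conj_vec (p j)) x"
      by (rule rc_mult_vec_le_of_mult_vec_le[OF x Sx])
    also have "\<dots> \<le> cheb_dist (p l) x * cheb_dist (p j) x"
      by (intro mult_mono dist) simp_all
    finally show ?thesis by (simp only: mult.commute)
  qed
  then have cross: "cross_term (h j) (h l) (w j) (w l) (rc (conj_vec (p j)) (S *v p l)) \<le> ?F" for j l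
    by (intro cross_term_le[OF w w F F])
  have F_bound: "h j * pw R (w j) \<le> ?F" if "R \<le> cheb_dist (p j) x" for j R
  proof -
    have "h j * pw R (w j) \<le> h j * pw (cheb_dist (p j) x) (w j)"
      using that w by (intro mult_left_mono pw_mono) simp_all
    then show ?thesis using F by (rule order_trans)
  qed
  have left: "h j * pw (rc (conj_vec (p j)) (S *v s)) (w j) \<le> ?F" for j
  proof (rule F_bound)
    have "rc (conj_vec (p j)) (S *v s) \<le> rc (conj_vec (p j)) (S *v x)"
      by (intro rc_mono_right matrix_vector_mult_mono \<open>s \<le> x\<close>)
    also have "\<dots> \<le> rc (conj_vec (p j)) x" by (rule rc_mono_right[OF Sx])
    finally show "rc (conj_vec (p j)) (S *v s) \<le> cheb_dist (p j) x" using dist(1) by (rule order_trans)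
  qed
  have right: "h l * pw (rc t (S *v p l)) (w l) \<le> ?F" for l
  proof (rule F_bound)
    have "rc t (S *v p l) \<le> rc (conj_vec x) (p l) * rc t x" by (rule rc_mult_vec_le_of_mult_vec_le[OF x Sx])
    also have "\<dots> \<le> rc (conj_vec x) (p l)" using \<open>rc t x \<le> 1\<close> mult_left_mono[of "rc t x" 1] by simp
    finally show "rc t (S *v p l) \<le> cheb_dist (p l) x" using dist(2) by (rule order_trans)
  qed
  show ?thesis using cross left right by (simp add: opt_value_le_iff)
qed

lemma opt_value_witness:
  fixes p :: "'m::finite \<Rightarrow> 'a::idem_semifield ^ 'n"
  assumes le: "opt_value p w h S s t \<le> \<theta>" and \<theta>: "\<theta> \<noteq> 0"
    and h: "\<And>j. h j \<noteq> 0" and w: "\<And>j. w j > 0" and "rc t (S *v s) \<le> 1"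
  shows "rc ((\<Sum>j\<in>UNIV. (pw \<theta> (- 1 / w j) * pw (h j) (1 / w j)) *s conj_vec (p j)) + t)
            (S *v ((\<Sum>j\<in>UNIV. (pw \<theta> (- 1 / w j) * pw (h j) (1 / w j)) *s p j) + s)) \<le> 1"
proof -
  define c where "c j = pw \<theta> (- 1 / w j) * pw (h j) (1 / w j)" for j
  have cross: "c l * (c j * rc (conj_vec (p j)) (S *v p l)) \<le> 1" for j l
  proof -
    have "cross_term (h j) (h l) (w j) (w l) (rc (conj_vec (p j)) (S *v p l)) \<le> \<theta>"
      using le by (simp add: opt_value_le_iff)
    then have "c j * (c l * rc (conj_vec (p j)) (S *v p l)) \<le> 1"
      unfolding c_def by (rule cross_term_le_imp_scaled_le_one[OF \<theta> h h w w])
    then show ?thesis by (simp only: mult.left_commute)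
  qed
  have left: "c j * rc (conj_vec (p j)) (S *v s) \<le> 1" for j
    using le scaled_pw_le_iff[OF \<theta> h w] by (simp add: c_def opt_value_le_iff)
  have right: "c l * rc t (S *v p l) \<le> 1" for l
    using le scaled_pw_le_iff[OF \<theta> h w] by (simp add: c_def opt_value_le_iff)
  let ?Q = "\<Sum>l\<in>UNIV. c l *s p l" and ?R = "\<Sum>j\<in>UNIV. c j *s conj_vec (p j)"
  have "rc ?R (S *v ?Q) = (\<Sum>l\<in>UNIV. \<Sum>j\<in>UNIV. c l * (c j * rc (conj_vec (p j)) (S *v p l)))"
    by (simp add: matrix_vector_mult_sum matrix_vector_mult_smult rc_sum_left rc_sum_right
        rc_smult_left rc_smult_right sum_distrib_left)
  then have "rc ?R (S *v ?Q) \<le> 1" using cross by (simp add: sum_le_iff)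
  moreover have "rc ?R (S *v s) = (\<Sum>j\<in>UNIV. c j * rc (conj_vec (p j)) (S *v s))"
    by (simp add: rc_sum_left rc_smult_left)
  then have "rc ?R (S *v s) \<le> 1" using left by (simp add: sum_le_iff)
  moreover have "rc t (S *v ?Q) = (\<Sum>l\<in>UNIV. c l * rc t (S *v p l))"
    by (simp add: matrix_vector_mult_sum matrix_vector_mult_smult rc_sum_right rc_smult_right)
  then have "rc t (S *v ?Q) \<le> 1" using right by (simp add: sum_le_iff)
  ultimately have "rc (?R + t) (S *v (?Q + s)) \<le> 1"
    using assms(5) by (simp add: matrix_vector_right_distrib rc_add_left rc_add_right)
  then show ?thesis by (simp add: c_def)
qed

theorem theorem2:
  fixes p :: "'m::finite \<Rightarrow> 'a::idem_semifield ^ 'n"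
    and w :: "'m \<Rightarrow> real"
    and h d :: "'m \<Rightarrow> 'a"
    and B :: "'a ^ 'n ^ 'n"
    and f g :: "'a ^ 'n"
  assumes p_reg: "\<And>j. regular (p j)"
    and w_pos: "\<And>j. w j > 0"
    and h_nz: "\<And>j. h j \<noteq> 0"
    and d_nz: "\<And>j. d j \<noteq> 0"
    and f_reg: "regular f" and g_reg: "regular g" and fg: "f \<le> g"
  defines "F \<equiv> \<lambda>x. \<Sum>j\<in>UNIV. h j * pw (rc (conj_vec (p j)) x + rc (conj_vec x) (p j)) (w j)"
    and "feasible \<equiv> \<lambda>x. regular x
           \<and> (\<forall>j. rc (conj_vec (p j)) x + rc (conj_vec x) (p j) \<le> d j)
           \<and> B *v x \<le> x \<and> f \<le> x \<and> x \<le> g"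
    and "Bs \<equiv> kstar B"
    and "s \<equiv> (\<Sum>j\<in>UNIV. inverse (d j) *s p j) + f"
    and "tm \<equiv> (\<Sum>j\<in>UNIV. inverse (d j) *s conj_vec (p j)) + conj_vec g"
  defines "\<theta> \<equiv> \<Sum>j\<in>UNIV. \<Sum>l\<in>UNIV.
              pw (h j) (w l / (w j + w l)) * pw (h l) (w j / (w j + w l))
                * pw (rc (conj_vec (p j)) (Bs *v p l)) (w j * w l / (w j + w l))
              + h j * pw (rc (conj_vec (p j)) (Bs *v s)) (w j)
              + h l * pw (rc tm (Bs *v p l)) (w l)"
  defines "q \<equiv> \<Sum>j\<in>UNIV. (pw \<theta> (- 1 / w j) * pw (h j) (1 / w j)) *s p j"
    and "rm \<equiv> \<Sum>j\<in>UNIV. (pw \<theta> (- 1 / w j) * pw (h j) (1 / w j)) *s conj_vec (p j)"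
  assumes tr: "Tr B \<le> 1"
    and ts: "rc tm (Bs *v s) \<le> 1"
  shows "(\<exists>x. feasible x \<and> F x = \<theta>) \<and> (\<forall>x. feasible x \<longrightarrow> \<theta> \<le> F x)
         \<and> {x. feasible x \<and> F x = \<theta>}
             = {Bs *v u | u. q + s \<le> u \<and> u \<le> conj_vec ((rm + tm) v* Bs)}"
proof -
  have s_reg: "regular s" unfolding s_def by (rule regular_mono[OF f_reg vec_add_ge2])
  have tm_reg: "regular tm"
    unfolding tm_def by (rule regular_mono[OF regular_conj_vec[OF g_reg] vec_add_ge2])
  have F_eq: "F = objective p w h" unfolding F_def objective_def cheb_dist_def ..
  have \<theta>_eq: "\<theta> = opt_value p w h Bs s tm" unfolding \<theta>_def opt_value_def cross_term_def ..
  have \<theta>_nz: "\<theta> \<noteq> 0"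
    unfolding \<theta>_eq Bs_def using regular_mono[OF s_reg le_kstar_mult_vec]
    by (rule opt_value_nonzero[OF h_nz p_reg])
  have feasible_iff: "feasible x \<longleftrightarrow> B *v x \<le> x \<and> s \<le> x \<and> rc tm x \<le> 1" for x
    using cheb_constraints_iff[where d = d and p = p and f = f and x = x,
        OF d_nz g_reg, folded s_def tm_def] regular_mono[OF s_reg, of x]
    unfolding feasible_def cheb_dist_def[symmetric] by blast
  have lower: "\<theta> \<le> F x" if "feasible x" for x
    using that regular_mono[OF s_reg, of x] unfolding \<theta>_eq F_eq feasible_iff Bs_def
    by (intro opt_value_le_objective[OF w_pos]) (simp_all add: kstar_mult_vec_eq)
  have optimal_iff:
    "feasible x \<and> F x = \<theta> \<longleftrightarrow> B *v x \<le> x \<and> q + s \<le> x \<and> rc (rm + tm) x \<le> 1" for x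
  proof -
    have "feasible x \<and> F x = \<theta> \<longleftrightarrow> feasible x \<and> F x \<le> \<theta>"
      using lower[of x] by auto
    also have "\<dots> \<longleftrightarrow> B *v x \<le> x \<and> q + s \<le> x \<and> rc (rm + tm) x \<le> 1"
      using objective_le_iff[where h = h and w = w and p = p and x = x,
          OF \<theta>_nz h_nz w_pos, folded q_def rm_def] regular_mono[OF s_reg, of x]
      unfolding feasible_iff F_eq rc_add_left by auto
    finally show ?thesis .
  qed
  have rm_tm_reg: "regular (rm + tm)" by (rule regular_mono[OF tm_reg vec_add_ge2])
  have solutions:
    "{x. feasible x \<and> F x = \<theta>} = {Bs *v u | u. q + s \<le> u \<and> u \<le> conj_vec ((rm + tm) v* Bs)}"
    unfolding optimal_iff Bs_def using tr rm_tm_reg by (rule kstar_solutions)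
  have "rc (rm + tm) (Bs *v (q + s)) \<le> 1"
    using opt_value_witness[where h = h and w = w and p = p and S = Bs,
        OF _ \<theta>_nz h_nz w_pos ts, folded q_def rm_def] \<theta>_eq by simp
  then have "q + s \<le> conj_vec ((rm + tm) v* Bs)"
    unfolding Bs_def le_conj_vec_kstar_iff[OF rm_tm_reg] .
  then show ?thesis using solutions lower by blast
qed

end
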